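(* Suppose that the limit $c_1:=\lim_{n\to\infty}E_n(F_1(n))/n$ exists and $c_1\in(0,1)$. Then for every sequence of positive numbers $(\lambda_n)_{n\ge1}$ with $\lambda_n/n\to1$, $$\lim_{L\to\infty}\limsup_{n\to\infty}\frac1n\sum_{k\in M_n^{Lc}}\big(\lambda_n p_{kn}+(\lambda_n p_{kn})^2\big)e^{-\lambda_n p_{kn}}=0,$$ where $M_n^{Lc}=\{k\ge1: np_{kn}>L\}$. In particular, for every such sequence $(\lambda_n)$ and every $\varepsilon>0$, $$\lim_{n\to\infty}\frac{1}{s_n^2}\sum_{k=1}^\infty(\lambda_n p_{kn})^2e^{-\lambda_n p_{kn}}\,I_{\{\lambda_n p_{kn}>\varepsilon s_n^2/a(s_n^2)\}}=0.$$
   Context: For each $n\ge1$, $P_n$ is a probability measure (expectation $E_n$) and $p_n=(p_{kn})_{k\ge1}$ is a probability vector. Under $P_n$ a sample of size $n$ is drawn i.i.d. from countably many species, species $k$ with probability $p_{kn}$; $X_k(n)$ is the number of times species $k$ appears, and $F_1(n)=\#\{k: X_k(n)=1\}$. For $\lambda>0$, $s_{\lambda n}^2=\sum_{k\ge1}\big(\lambda p_{kn}+(\lambda p_{kn})^2\big)e^{-\lambda p_{kn}}$ and $s_n^2=s_{nn}^2$. The function $a:[0,\infty)\to[1,\infty)$ satisfies $a(t)/\sqrt t\to\infty$ and $a(t)/t\to0$ as $t\to\infty$. *)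

theory Defs
  imports "HOL-Probability.Probability"
begin

text \<open>Species are indexed by natural numbers; p n k is the probability p_{kn} of species k
  in the n-th model.\<close>

definition species_pmf :: "(nat \<Rightarrow> nat \<Rightarrow> real) \<Rightarrow> nat \<Rightarrow> nat pmf" where
  "species_pmf p n = embed_pmf (\<lambda>k. p n k)"

definition sample_pmf :: "(nat \<Rightarrow> nat \<Rightarrow> real) \<Rightarrow> nat \<Rightarrow> (nat \<Rightarrow> nat) pmf" where
  "sample_pmf p n = Pi_pmf {..<n} 0 (\<lambda>_. species_pmf p n)"

definition Xcount :: "nat \<Rightarrow> (nat \<Rightarrow> nat) \<Rightarrow> nat \<Rightarrow> nat" where
  "Xcount n \<omega> k = card {i \<in> {..<n}. \<omega> i = k}"

definition F1 :: "nat \<Rightarrow> (nat \<Rightarrow> nat) \<Rightarrow> nat" where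
  "F1 n \<omega> = card {k. Xcount n \<omega> k = 1}"

definition EF1 :: "(nat \<Rightarrow> nat \<Rightarrow> real) \<Rightarrow> nat \<Rightarrow> real" where
  "EF1 p n = measure_pmf.expectation (sample_pmf p n) (\<lambda>\<omega>. real (F1 n \<omega>))"

definition s2 :: "(nat \<Rightarrow> nat \<Rightarrow> real) \<Rightarrow> real \<Rightarrow> nat \<Rightarrow> real" where
  "s2 p lam n = (\<Sum>\<^sub>\<infinity>k. (lam * p n k + (lam * p n k)^2) * exp (- lam * p n k))"

definition sn2 :: "(nat \<Rightarrow> nat \<Rightarrow> real) \<Rightarrow> nat \<Rightarrow> real" where
  "sn2 p n = s2 p (real n) n"

end

theory Submission
  imports Defs "HOL-Real_Asymp.Real_Asymp"
begin

text \<open>Everything rests on the bound (x + x^2) exp(-x) <= x (1 + T) exp(-T) for 0 <= T <= x: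
  summed over the species with lam p_k >= T it yields at most (1 + T) exp(-T) lam, and eventually
  n/2 <= lam_n <= 2n. In the first limit n p_k > L forces lam_n p_k >= L/2. In the second, the
  threshold eps s_n^2 / a(s_n^2) tends to infinity because s_n^2 grows linearly: every species seen
  exactly once occupies a sample position whose value no other position takes, an event of
  probability sum_k p_k (1 - p_k)^(n-1) <= e sum_k p_k exp(-n p_k); hence E_n F_1(n) <= e s_n^2,
  while E_n F_1(n) / n tends to c_1 > 0.\<close>

lemma summable_on_dominated:
  fixes f q :: "'a \<Rightarrow> real"
  assumes "q summable_on UNIV" and "\<And>k. 0 \<le> f k" and "\<And>k. f k \<le> C * q k"
  shows "f summable_on B"
proof -
  have "(\<lambda>k. C * q k) summable_on UNIV"
    using assms(1) by (rule summable_on_cmult_right)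
  then have "f summable_on UNIV"
    by (rule summable_on_comparison_test) (use assms in auto)
  then show ?thesis by (rule summable_on_subset_banach) simp
qed

lemma infsum_le_has_sum:
  fixes q :: "'a \<Rightarrow> real"
  assumes "\<And>k. 0 \<le> q k" and "(q has_sum s) UNIV"
  shows "(\<Sum>\<^sub>\<infinity>k\<in>K. q k) \<le> s"
proof -
  have q: "q summable_on UNIV" using assms(2) by (rule has_sum_imp_summable)
  then have "(\<Sum>\<^sub>\<infinity>k\<in>K. q k) \<le> (\<Sum>\<^sub>\<infinity>k. q k)"
    using assms(1) by (intro infsum_mono_neutral summable_on_subset_banach[OF q]) auto
  with assms(2) show ?thesis by (simp add: infsumI)
qed

lemma nn_integral_count_space_nat_infsum:
  fixes f :: "nat \<Rightarrow> real"
  assumes "\<And>k. 0 \<le> f k" and "f summable_on UNIV"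
  shows "(\<integral>\<^sup>+k. ennreal (f k) \<partial>count_space UNIV) = ennreal (\<Sum>\<^sub>\<infinity>k. f k)"
proof -
  have "f sums (\<Sum>\<^sub>\<infinity>k. f k)"
    using assms(2) by (intro has_sum_imp_sums has_sum_infsum)
  with assms(1) show ?thesis
    by (simp add: nn_integral_count_space_nat suminf_ennreal2 sums_iff)
qed

lemma pmf_embed_pmf_has_sum:
  fixes q :: "nat \<Rightarrow> real"
  assumes "\<And>k. 0 \<le> q k" and "(q has_sum 1) UNIV"
  shows "pmf (embed_pmf q) k = q k"
  using assms by (simp add: pmf_embed_pmf nn_integral_count_space_nat_infsum has_sum_imp_summable infsumI)

lemma one_minus_power_le_exp:
  fixes x :: real
  assumes "0 \<le> x" and "x \<le> 1"
  shows "(1 - x) ^ (n - 1) \<le> exp 1 * exp (- real n * x)"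
proof (cases "n = 0")
  case False
  have "(1 - x) ^ (n - 1) \<le> exp (- x) ^ (n - 1)"
    using assms exp_ge_add_one_self[of "- x"] by (intro power_mono) auto
  also have "\<dots> = exp x * exp (- real n * x)"
    using False by (simp add: exp_of_nat_mult[symmetric] algebra_simps flip: exp_add)
  also have "\<dots> \<le> exp 1 * exp (- real n * x)"
    using assms by simp
  finally show ?thesis .
qed simp

lemma poisson_term_le:
  fixes x T :: real
  assumes "0 \<le> T" and "T \<le> x"
  shows "(x + x^2) * exp (- x) \<le> x * ((1 + T) * exp (- T))"
proof -
  have "1 + x \<le> (1 + T) * (1 + (x - T))"
    using assms mult_left_mono[of T x T] by (simp add: algebra_simps)
  also have "\<dots> \<le> (1 + T) * exp (x - T)"
    using assms by (intro mult_left_mono exp_ge_add_one_self) auto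
  finally have "(1 + x) * exp (- x) \<le> (1 + T) * exp (x - T) * exp (- x)"
    by (rule mult_right_mono) simp
  also have "\<dots> = (1 + T) * exp (- T)" by (simp flip: exp_add)
  finally have "x * ((1 + x) * exp (- x)) \<le> x * ((1 + T) * exp (- T))"
    using assms by (intro mult_left_mono) auto
  then show ?thesis by (simp add: power2_eq_square algebra_simps)
qed

lemma poisson_terms_summable_on:
  fixes q :: "'a \<Rightarrow> real"
  assumes "\<And>k. 0 \<le> q k" and "q summable_on UNIV" and "0 \<le> lam"
  shows "(\<lambda>k. (lam * q k + (lam * q k)^2) * exp (- lam * q k)) summable_on K"
proof (rule summable_on_dominated[OF assms(2)])
  fix k
  have "0 \<le> lam * q k" using assms by simp
  then show "(lam * q k + (lam * q k)^2) * exp (- lam * q k) \<le> lam * q k"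
    using poisson_term_le[of 0 "lam * q k"] by simp
qed (use assms in simp)

lemma infsum_poisson_terms_le:
  fixes q :: "'a \<Rightarrow> real"
  assumes nonneg: "\<And>k. 0 \<le> q k" and sum: "(q has_sum 1) UNIV" and "0 \<le> lam" and "0 \<le> T"
    and large: "\<And>k. k \<in> K \<Longrightarrow> T \<le> lam * q k"
  shows "(\<Sum>\<^sub>\<infinity>k\<in>K. (lam * q k + (lam * q k)^2) * exp (- lam * q k)) \<le> (1 + T) * exp (- T) * lam"
proof -
  have q: "q summable_on K" for K
    using has_sum_imp_summable[OF sum] by (rule summable_on_subset_banach) simp
  have "(\<Sum>\<^sub>\<infinity>k\<in>K. (lam * q k + (lam * q k)^2) * exp (- lam * q k))
      \<le> (\<Sum>\<^sub>\<infinity>k\<in>K. (1 + T) * exp (- T) * lam * q k)"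
  proof (rule infsum_mono)
    show "(\<lambda>k. (lam * q k + (lam * q k)^2) * exp (- lam * q k)) summable_on K"
      using assms by (intro poisson_terms_summable_on has_sum_imp_summable)
    show "(\<lambda>k. (1 + T) * exp (- T) * lam * q k) summable_on K"
      using q by (rule summable_on_cmult_right)
    fix k assume "k \<in> K"
    then show "(lam * q k + (lam * q k)^2) * exp (- lam * q k) \<le> (1 + T) * exp (- T) * lam * q k"
      using poisson_term_le[OF \<open>0 \<le> T\<close> large] by (simp add: mult_ac)
  qed
  also have "\<dots> = (1 + T) * exp (- T) * lam * (\<Sum>\<^sub>\<infinity>k\<in>K. q k)"
    using q by (rule infsum_cmult_right)
  also have "\<dots> \<le> (1 + T) * exp (- T) * lam"
    using assms infsum_le_has_sum[OF nonneg sum] by (intro mult_left_le) auto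
  finally show ?thesis .
qed

lemma infsum_poisson_sq_terms_above_le:
  fixes q :: "'a \<Rightarrow> real"
  assumes nonneg: "\<And>k. 0 \<le> q k" and sum: "(q has_sum 1) UNIV" and "0 \<le> lam" and "0 \<le> T"
  shows "(\<Sum>\<^sub>\<infinity>k. (lam * q k)^2 * exp (- lam * q k) * (if lam * q k > T then 1 else 0))
       \<le> (1 + T) * exp (- T) * lam"
proof -
  let ?K = "{k. lam * q k > T}"
  have full: "(\<lambda>k. (lam * q k + (lam * q k)^2) * exp (- lam * q k)) summable_on ?K"
    using assms has_sum_imp_summable[OF sum] by (intro poisson_terms_summable_on)
  have le_full: "(lam * q k)^2 * exp (- lam * q k) \<le> (lam * q k + (lam * q k)^2) * exp (- lam * q k)" for k
    using assms by (intro mult_right_mono) auto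
  have "(\<Sum>\<^sub>\<infinity>k. (lam * q k)^2 * exp (- lam * q k) * (if lam * q k > T then 1 else 0))
      = (\<Sum>\<^sub>\<infinity>k\<in>?K. (lam * q k)^2 * exp (- lam * q k))"
    by (rule infsum_cong_neutral) auto
  also have "\<dots> \<le> (\<Sum>\<^sub>\<infinity>k\<in>?K. (lam * q k + (lam * q k)^2) * exp (- lam * q k))"
  proof (rule infsum_mono[OF _ full le_full])
    show "(\<lambda>k. (lam * q k)^2 * exp (- lam * q k)) summable_on ?K"
      using full le_full by (rule summable_on_comparison_test) simp
  qed
  also have "\<dots> \<le> (1 + T) * exp (- T) * lam"
    using assms by (intro infsum_poisson_terms_le) auto
  finally show ?thesis .
qed

lemma infsum_mult_exp_le_s2:
  fixes p :: "nat \<Rightarrow> nat \<Rightarrow> real"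
  assumes nonneg: "\<And>k. 0 \<le> p n k" and summable: "p n summable_on UNIV" and "0 \<le> lam"
  shows "lam * (\<Sum>\<^sub>\<infinity>k. p n k * exp (- lam * p n k)) \<le> s2 p lam n"
proof -
  have "(\<lambda>k. p n k * exp (- lam * p n k)) summable_on UNIV"
    using summable by (rule summable_on_dominated[where C=1]) (use nonneg \<open>0 \<le> lam\<close> in \<open>auto simp: mult_left_le\<close>)
  then have "(\<Sum>\<^sub>\<infinity>k. lam * (p n k * exp (- lam * p n k)))
      \<le> (\<Sum>\<^sub>\<infinity>k. (lam * p n k + (lam * p n k)^2) * exp (- lam * p n k))"
    using assms by (intro infsum_mono summable_on_cmult_right poisson_terms_summable_on)
      (auto simp: algebra_simps)
  then show ?thesis by (simp add: s2_def infsum_cmult_right')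
qed

lemma emeasure_Pi_pmf_unique_value:
  fixes Q :: "'b pmf" and I :: "'a set"
  assumes "finite I" and "i \<in> I"
  shows "emeasure (Pi_pmf I d (\<lambda>_. Q)) {\<omega>. \<forall>j\<in>I. j \<noteq> i \<longrightarrow> \<omega> j \<noteq> \<omega> i}
       = (\<integral>\<^sup>+ y. ennreal ((1 - pmf Q y) ^ (card I - 1)) \<partial>Q)"
proof -
  define A where "A = I - {i}"
  have A: "finite A" "i \<notin> A" "I = insert i A" "card A = card I - 1"
    using assms by (auto simp: A_def)
  define S where "S = {\<omega> :: 'a \<Rightarrow> 'b. \<forall>j\<in>I. j \<noteq> i \<longrightarrow> \<omega> j \<noteq> \<omega> i}"
  have "emeasure (Pi_pmf I d (\<lambda>_. Q)) S =
      (\<integral>\<^sup>+ y. \<integral>\<^sup>+ f. indicator S (f(i := y)) \<partial>Pi_pmf A d (\<lambda>_. Q) \<partial>Q)"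
    by (simp add: A(3) Pi_pmf_insert'[OF A(1,2)])
  also have "\<dots> = (\<integral>\<^sup>+ y. emeasure (Pi_pmf A d (\<lambda>_. Q)) (Pi A (\<lambda>_. - {y})) \<partial>Q)"
  proof (intro nn_integral_cong)
    fix y
    have "indicator S (f(i := y)) = (indicator (Pi A (\<lambda>_. - {y})) f :: ennreal)" for f
      using A by (auto simp: S_def indicator_def Pi_def)
    then show "(\<integral>\<^sup>+ f. indicator S (f(i := y)) \<partial>Pi_pmf A d (\<lambda>_. Q))
        = emeasure (Pi_pmf A d (\<lambda>_. Q)) (Pi A (\<lambda>_. - {y}))"
      by simp
  qed
  also have "\<dots> = (\<integral>\<^sup>+ y. ennreal ((1 - pmf Q y) ^ (card I - 1)) \<partial>Q)"
  proof -
    have "measure_pmf.prob Q (- {y}) = 1 - pmf Q y" for y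
      using measure_pmf.prob_compl[of "{y}" Q] by (simp add: Compl_eq_Diff_UNIV measure_pmf_single)
    then show ?thesis
      using A by (simp add: measure_pmf.emeasure_eq_measure measure_Pi_pmf_Pi)
  qed
  finally show ?thesis by (simp add: S_def)
qed

lemma prob_sample_unique_le:
  fixes p :: "nat \<Rightarrow> nat \<Rightarrow> real"
  assumes nonneg: "\<And>k. 0 \<le> p n k" and sum: "(p n has_sum 1) UNIV" and "i < n"
  shows "measure_pmf.prob (sample_pmf p n) {\<omega>. \<forall>j<n. j \<noteq> i \<longrightarrow> \<omega> j \<noteq> \<omega> i}
       \<le> exp 1 * (\<Sum>\<^sub>\<infinity>k. p n k * exp (- real n * p n k))"
proof -
  define g where "g k = p n k * (exp 1 * exp (- real n * p n k))" for k
  have pmf: "pmf (species_pmf p n) k = p n k" for k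
    unfolding species_pmf_def using nonneg sum by (rule pmf_embed_pmf_has_sum)
  have le1: "p n k \<le> 1" for k
    using infsum_le_has_sum[OF nonneg sum, of "{k}"] by simp
  have g_nonneg: "0 \<le> g k" for k
    using nonneg by (simp add: g_def)
  have g_le: "g k \<le> exp 1 * p n k" for k
    using nonneg[of k] mult_left_le[of "exp (- real n * p n k)" "exp 1 * p n k"]
    by (simp add: g_def mult_ac)
  have g: "g summable_on UNIV"
    using has_sum_imp_summable[OF sum] g_nonneg g_le by (rule summable_on_dominated)
  have "emeasure (sample_pmf p n) {\<omega>. \<forall>j<n. j \<noteq> i \<longrightarrow> \<omega> j \<noteq> \<omega> i}
      = (\<integral>\<^sup>+ y. ennreal ((1 - p n y) ^ (n - 1)) \<partial>species_pmf p n)"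
    using emeasure_Pi_pmf_unique_value[of "{..<n}" i 0 "species_pmf p n"] \<open>i < n\<close>
    by (simp add: sample_pmf_def pmf Ball_def)
  also have "\<dots> \<le> (\<integral>\<^sup>+ y. ennreal (exp 1 * exp (- real n * p n y)) \<partial>species_pmf p n)"
    using nonneg le1 by (intro nn_integral_mono ennreal_leI one_minus_power_le_exp)
  also have "\<dots> = (\<integral>\<^sup>+ y. ennreal (g y) \<partial>count_space UNIV)"
    using nonneg by (simp add: nn_integral_measure_pmf pmf g_def ennreal_mult')
  also have "\<dots> = ennreal (\<Sum>\<^sub>\<infinity>k. g k)"
    using g_nonneg g by (rule nn_integral_count_space_nat_infsum)
  also have "(\<Sum>\<^sub>\<infinity>k. g k) = exp 1 * (\<Sum>\<^sub>\<infinity>k. p n k * exp (- real n * p n k))"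
    by (simp add: g_def mult.left_commute[of "p n _"] infsum_cmult_right')
  finally show ?thesis
    using nonneg by (simp add: measure_pmf.emeasure_eq_measure infsum_nonneg)
qed

lemma F1_le_sum_unique:
  "real (F1 n \<omega>) \<le> (\<Sum>i<n. indicator {\<omega>. \<forall>j<n. j \<noteq> i \<longrightarrow> \<omega> j \<noteq> \<omega> i} \<omega>)"
proof -
  define U where "U = {i \<in> {..<n}. \<forall>j<n. j \<noteq> i \<longrightarrow> \<omega> j \<noteq> \<omega> i}"
  have "{k. Xcount n \<omega> k = 1} \<subseteq> \<omega> ` U"
  proof
    fix k assume "k \<in> {k. Xcount n \<omega> k = 1}"
    then have "card {i \<in> {..<n}. \<omega> i = k} = 1"
      by (simp add: Xcount_def)
    then obtain i where "{i \<in> {..<n}. \<omega> i = k} = {i}"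
      by (rule card_1_singletonE)
    then have unique: "j < n \<and> \<omega> j = k \<longleftrightarrow> j = i" for j
      by (simp add: set_eq_iff)
    then have "i < n" "\<omega> i = k"
      by blast+
    moreover have "\<omega> j \<noteq> \<omega> i" if "j < n" "j \<noteq> i" for j
      using unique[of j] that \<open>\<omega> i = k\<close> by blast
    ultimately show "k \<in> \<omega> ` U"
      unfolding U_def by blast
  qed
  then have "F1 n \<omega> \<le> card (\<omega> ` U)"
    unfolding F1_def by (rule card_mono[rotated]) (simp add: U_def)
  also have "\<dots> \<le> card U"
    by (rule card_image_le) (simp add: U_def)
  finally have "real (F1 n \<omega>) \<le> (\<Sum>i\<in>U. 1)" by simp
  also have "\<dots> = (\<Sum>i<n. if \<forall>j<n. j \<noteq> i \<longrightarrow> \<omega> j \<noteq> \<omega> i then 1 else 0)"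
    unfolding U_def by (rule sum.inter_filter) simp
  also have "\<dots> = (\<Sum>i<n. indicator {\<omega>. \<forall>j<n. j \<noteq> i \<longrightarrow> \<omega> j \<noteq> \<omega> i} \<omega>)"
    by (rule sum.cong) (simp_all add: indicator_def)
  finally show ?thesis .
qed

lemma EF1_le_exp_sn2:
  fixes p :: "nat \<Rightarrow> nat \<Rightarrow> real"
  assumes nonneg: "\<And>k. 0 \<le> p n k" and sum: "(p n has_sum 1) UNIV"
  shows "EF1 p n \<le> exp 1 * sn2 p n"
proof -
  define U where "U i = {\<omega> :: nat \<Rightarrow> nat. \<forall>j<n. j \<noteq> i \<longrightarrow> \<omega> j \<noteq> \<omega> i}" for i
  define B where "B = (\<Sum>\<^sub>\<infinity>k. p n k * exp (- real n * p n k))"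
  let ?M = "measure_pmf (sample_pmf p n)"
  have F1_le: "real (F1 n \<omega>) \<le> (\<Sum>i<n. indicator (U i) \<omega>)" for \<omega>
    unfolding U_def by (rule F1_le_sum_unique)
  have int_U: "integrable ?M (\<lambda>\<omega>. indicator (U i) \<omega> :: real)" for i
    by (rule measure_pmf.integrable_const_bound[where B=1]) (auto simp: indicator_def)
  have "integrable ?M (\<lambda>\<omega>. real (F1 n \<omega>))"
  proof (rule measure_pmf.integrable_const_bound[where B="real n"])
    have "(\<Sum>i<n. indicator (U i) \<omega>) \<le> real (card {..<n}) * (1 :: real)" for \<omega>
      by (rule sum_bounded_above) (simp add: indicator_def)
    with F1_le have "real (F1 n \<omega>) \<le> real n" for \<omega>
      using order_trans by (metis card_lessThan mult_1_right)
    then show "AE \<omega> in ?M. norm (real (F1 n \<omega>)) \<le> real n"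
      by (intro AE_I2) simp
  qed simp
  then have "EF1 p n \<le> measure_pmf.expectation (sample_pmf p n) (\<lambda>\<omega>. \<Sum>i<n. indicator (U i) \<omega>)"
    unfolding EF1_def using int_U F1_le by (intro integral_mono) auto
  also have "\<dots> = (\<Sum>i<n. measure_pmf.prob (sample_pmf p n) (U i))"
    using int_U by (simp add: integral_sum)
  also have "\<dots> \<le> (\<Sum>i<n. exp 1 * B)"
    unfolding U_def B_def using nonneg sum by (intro sum_mono prob_sample_unique_le) simp_all
  also have "\<dots> = exp 1 * (real n * B)"
    by simp
  also have "\<dots> \<le> exp 1 * sn2 p n"
    unfolding B_def sn2_def using nonneg has_sum_imp_summable[OF sum]
    by (intro mult_left_mono infsum_mult_exp_le_s2) simp_all
  finally show ?thesis .
qed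

lemma sn2_eventually_ge_linear:
  fixes p :: "nat \<Rightarrow> nat \<Rightarrow> real"
  assumes nonneg: "\<And>n k. n \<ge> 1 \<Longrightarrow> 0 \<le> p n k" and sum: "\<And>n. n \<ge> 1 \<Longrightarrow> (p n has_sum 1) UNIV"
    and c1: "(\<lambda>n. EF1 p n / real n) \<longlonglongrightarrow> c1" "0 < c1"
  shows "\<forall>\<^sub>F n in sequentially. c1 / (2 * exp 1) * real n \<le> sn2 p n"
proof -
  have "\<forall>\<^sub>F n in sequentially. c1 / 2 < EF1 p n / real n"
    by (rule order_tendstoD(1)[OF c1(1)]) (use c1(2) in simp)
  with eventually_ge_at_top[of 1] show ?thesis
  proof eventually_elim
    case (elim n)
    then have "c1 / 2 * real n \<le> EF1 p n"
      by (simp add: field_simps)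
    also have "\<dots> \<le> exp 1 * sn2 p n"
      using elim nonneg sum by (intro EF1_le_exp_sn2) auto
    finally show ?case
      by (simp add: field_simps)
  qed
qed

lemma tendsto_limsup_0_if_eventually_bounded:
  fixes X :: "'a \<Rightarrow> nat \<Rightarrow> real"
  assumes bounded: "\<forall>\<^sub>F L in F. \<forall>\<^sub>F n in sequentially. 0 \<le> X L n \<and> X L n \<le> g L"
    and g: "(g \<longlongrightarrow> 0) F"
  shows "((\<lambda>L. limsup (\<lambda>n. ereal (X L n))) \<longlongrightarrow> 0) F"
proof (rule tendsto_sandwich)
  show "\<forall>\<^sub>F L in F. 0 \<le> limsup (\<lambda>n. ereal (X L n))"
    using bounded
    by eventually_elim (rule le_Limsup[OF trivial_limit_sequentially], auto elim: eventually_mono)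
  show "\<forall>\<^sub>F L in F. limsup (\<lambda>n. ereal (X L n)) \<le> ereal (g L)"
    using bounded by eventually_elim (rule Limsup_bounded, auto elim: eventually_mono)
  show "((\<lambda>L. ereal (g L)) \<longlongrightarrow> 0) F"
    using tendsto_ereal[OF g] by (simp add: zero_ereal_def)
qed simp

lemma eventually_ratio_bounds:
  fixes lam :: "nat \<Rightarrow> real"
  assumes "(\<lambda>n. lam n / real n) \<longlonglongrightarrow> 1"
  shows "\<forall>\<^sub>F n in sequentially. n \<ge> 1 \<and> real n / 2 \<le> lam n \<and> lam n \<le> 2 * real n"
proof -
  have "\<forall>\<^sub>F n in sequentially. 1/2 < lam n / real n"
    by (rule order_tendstoD(1)[OF assms]) simp
  moreover have "\<forall>\<^sub>F n in sequentially. lam n / real n < 2"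
    by (rule order_tendstoD(2)[OF assms]) simp
  ultimately show ?thesis
    using eventually_ge_at_top[of 1]
  proof eventually_elim
    case (elim n)
    then have "0 < real n" by simp
    with elim show ?case by (simp add: less_divide_eq divide_less_eq)
  qed
qed

lemma filterlim_scaled_ratio_at_top:
  fixes a :: "real \<Rightarrow> real" and s :: "'a \<Rightarrow> real"
  assumes a_ge: "\<And>t. t \<ge> 0 \<Longrightarrow> a t \<ge> 1" and a_lin: "((\<lambda>t. a t / t) \<longlongrightarrow> 0) at_top"
    and s: "filterlim s at_top F" and "0 < \<epsilon>"
  shows "filterlim (\<lambda>x. \<epsilon> * s x / a (s x)) at_top F"
proof -
  have "((\<lambda>x. a (s x) / s x) \<longlongrightarrow> 0) F"
    using a_lin s by (rule filterlim_compose)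
  moreover have "\<forall>\<^sub>F x in F. 0 < s x"
    using s unfolding filterlim_at_top_dense by blast
  then have "\<forall>\<^sub>F x in F. 0 < a (s x) / s x"
  proof eventually_elim
    case (elim x)
    with a_ge[of "s x"] show ?case by simp
  qed
  ultimately have "filterlim (\<lambda>x. inverse (a (s x) / s x)) at_top F"
    by (rule filterlim_inverse_at_top)
  then have "filterlim (\<lambda>x. \<epsilon> * inverse (a (s x) / s x)) at_top F"
    by (rule filterlim_tendsto_pos_mult_at_top[OF tendsto_const \<open>0 < \<epsilon>\<close>])
  then show ?thesis
    by (simp add: field_simps)
qed

lemma limsup_large_species_tendsto_0:
  fixes p :: "nat \<Rightarrow> nat \<Rightarrow> real" and lam :: "nat \<Rightarrow> real"
  assumes nonneg: "\<And>n k. n \<ge> 1 \<Longrightarrow> 0 \<le> p n k" and sum: "\<And>n. n \<ge> 1 \<Longrightarrow> (p n has_sum 1) UNIV"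
    and lam: "(\<lambda>n. lam n / real n) \<longlonglongrightarrow> 1"
  shows "((\<lambda>L. limsup (\<lambda>n. ereal (1 / real n *
            (\<Sum>\<^sub>\<infinity>k\<in>{k. real n * p n k > L}.
              (lam n * p n k + (lam n * p n k)^2) * exp (- lam n * p n k)))))
          \<longlongrightarrow> 0) at_top"
proof (rule tendsto_limsup_0_if_eventually_bounded)
  show "((\<lambda>L::real. 2 * ((1 + L / 2) * exp (- (L / 2)))) \<longlongrightarrow> 0) at_top"
    by real_asymp
  show "\<forall>\<^sub>F L in at_top. \<forall>\<^sub>F n in sequentially.
      0 \<le> 1 / real n * (\<Sum>\<^sub>\<infinity>k\<in>{k. real n * p n k > L}.
              (lam n * p n k + (lam n * p n k)^2) * exp (- lam n * p n k))
    \<and> 1 / real n * (\<Sum>\<^sub>\<infinity>k\<in>{k. real n * p n k > L}.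
              (lam n * p n k + (lam n * p n k)^2) * exp (- lam n * p n k))
      \<le> 2 * ((1 + L / 2) * exp (- (L / 2)))"
    using eventually_ge_at_top[of "0::real"]
  proof eventually_elim
    case (elim L)
    then have L: "0 \<le> L" .
    show ?case
      using eventually_ratio_bounds[OF lam]
    proof eventually_elim
      case (elim n)
      let ?S = "\<Sum>\<^sub>\<infinity>k\<in>{k. real n * p n k > L}.
              (lam n * p n k + (lam n * p n k)^2) * exp (- lam n * p n k)"
      have lam_nonneg: "0 \<le> lam n" and n_pos: "0 < real n"
        using elim by auto
      have "L / 2 \<le> lam n * p n k" if "real n * p n k > L" for k
        using that elim mult_right_mono[of "real n / 2" "lam n" "p n k"] nonneg[of n k] by auto
      then have "?S \<le> (1 + L / 2) * exp (- (L / 2)) * lam n"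
        using elim nonneg sum L lam_nonneg by (intro infsum_poisson_terms_le) auto
      also have "\<dots> \<le> (1 + L / 2) * exp (- (L / 2)) * (2 * real n)"
        using elim L by (intro mult_left_mono) auto
      finally have "?S / real n \<le> 2 * ((1 + L / 2) * exp (- (L / 2)))"
        using n_pos by (simp add: divide_le_eq mult_ac)
      moreover have "0 \<le> ?S"
        using elim nonneg lam_nonneg by (intro infsum_nonneg) auto
      ultimately show ?case
        by simp
    qed
  qed
qed

lemma lindeberg_sum_tendsto_0:
  fixes p :: "nat \<Rightarrow> nat \<Rightarrow> real" and lam :: "nat \<Rightarrow> real" and a :: "real \<Rightarrow> real"
  assumes nonneg: "\<And>n k. n \<ge> 1 \<Longrightarrow> 0 \<le> p n k" and sum: "\<And>n. n \<ge> 1 \<Longrightarrow> (p n has_sum 1) UNIV"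
    and lam: "(\<lambda>n. lam n / real n) \<longlonglongrightarrow> 1"
    and a_ge: "\<And>t. t \<ge> 0 \<Longrightarrow> a t \<ge> 1" and a_lin: "((\<lambda>t. a t / t) \<longlongrightarrow> 0) at_top"
    and "0 < c" and s_ge: "\<forall>\<^sub>F n in sequentially. c * real n \<le> sn2 p n"
    and "0 < \<epsilon>"
  shows "(\<lambda>n. 1 / sn2 p n *
          (\<Sum>\<^sub>\<infinity>k. (lam n * p n k)^2 * exp (- lam n * p n k) *
             (if lam n * p n k > \<epsilon> * sn2 p n / a (sn2 p n) then 1 else 0)))
        \<longlonglongrightarrow> 0"
proof -
  define T where "T n = \<epsilon> * sn2 p n / a (sn2 p n)" for n
  define h :: "real \<Rightarrow> real" where "h t = (1 + t) * exp (- t)" for t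
  have "filterlim (\<lambda>n. c * real n) at_top sequentially"
    using \<open>0 < c\<close> by (intro filterlim_tendsto_pos_mult_at_top[OF tendsto_const] filterlim_real_sequentially)
  then have s_top: "filterlim (sn2 p) at_top sequentially"
    using s_ge by (rule filterlim_at_top_mono)
  have T_top: "filterlim T at_top sequentially"
    unfolding T_def using a_ge a_lin s_top \<open>0 < \<epsilon>\<close> by (rule filterlim_scaled_ratio_at_top)
  have "(h \<longlongrightarrow> 0) at_top"
    unfolding h_def by real_asymp
  then have bound: "(\<lambda>n. 2 / c * h (T n)) \<longlonglongrightarrow> 0"
    using filterlim_compose[OF _ T_top] tendsto_mult_right_zero by blast
  define Y where "Y n = 1 / sn2 p n *
      (\<Sum>\<^sub>\<infinity>k. (lam n * p n k)^2 * exp (- lam n * p n k) *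
         (if lam n * p n k > \<epsilon> * sn2 p n / a (sn2 p n) then 1 else 0))" for n
  have "\<forall>\<^sub>F n in sequentially. 0 < T n" "\<forall>\<^sub>F n in sequentially. 0 < sn2 p n"
    using T_top s_top unfolding filterlim_at_top_dense by blast+
  with s_ge eventually_ratio_bounds[OF lam]
  have "\<forall>\<^sub>F n in sequentially. 0 \<le> Y n \<and> Y n \<le> 2 / c * h (T n)"
  proof eventually_elim
    case (elim n)
    let ?Z = "\<Sum>\<^sub>\<infinity>k. (lam n * p n k)^2 * exp (- lam n * p n k) * (if lam n * p n k > T n then 1 else 0)"
    have "?Z \<le> h (T n) * lam n"
      unfolding h_def using elim nonneg sum by (intro infsum_poisson_sq_terms_above_le) auto
    also have "\<dots> \<le> h (T n) * (2 * real n)"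
      using elim by (intro mult_left_mono) (auto simp: h_def)
    also have "\<dots> \<le> h (T n) * (2 / c * sn2 p n)"
      using elim \<open>0 < c\<close> by (intro mult_left_mono) (auto simp: h_def field_simps)
    finally have "?Z / sn2 p n \<le> 2 / c * h (T n)"
      using elim by (simp add: divide_le_eq mult_ac)
    moreover have "0 \<le> ?Z"
      by (intro infsum_nonneg) simp
    ultimately show ?case
      using elim by (simp add: Y_def T_def)
  qed
  then have "Y \<longlonglongrightarrow> 0"
    by (intro tendsto_sandwich[OF _ _ tendsto_const bound]) (auto elim: eventually_mono)
  then show ?thesis
    unfolding Y_def .
qed

theorem lemma3p1:
  fixes p :: "nat \<Rightarrow> nat \<Rightarrow> real" and a :: "real \<Rightarrow> real"
  assumes p_nonneg: "\<And>n k. n \<ge> 1 \<Longrightarrow> p n k \<ge> 0"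
    and p_sum: "\<And>n. n \<ge> 1 \<Longrightarrow> (\<lambda>k. p n k) sums 1"
    and a_ge: "\<And>t. t \<ge> 0 \<Longrightarrow> a t \<ge> 1"
    and a_sqrt: "filterlim (\<lambda>t. a t / sqrt t) at_top at_top"
    and a_lin: "((\<lambda>t. a t / t) \<longlongrightarrow> 0) at_top"
    and c1: "\<exists>c1. (\<lambda>n. EF1 p n / real n) \<longlonglongrightarrow> c1 \<and> 0 < c1 \<and> c1 < 1"
  shows "\<forall>lam :: nat \<Rightarrow> real. (\<forall>n. lam n > 0) \<and> (\<lambda>n. lam n / real n) \<longlonglongrightarrow> 1 \<longrightarrow>
      ((\<lambda>L. limsup (\<lambda>n. ereal (1 / real n *
          (\<Sum>\<^sub>\<infinity>k\<in>{k. real n * p n k > L}.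
             (lam n * p n k + (lam n * p n k)^2) * exp (- lam n * p n k)))))
        \<longlongrightarrow> 0) at_top
      \<and> (\<forall>\<epsilon>>0. (\<lambda>n. 1 / sn2 p n *
          (\<Sum>\<^sub>\<infinity>k. (lam n * p n k)^2 * exp (- lam n * p n k) *
             (if lam n * p n k > \<epsilon> * sn2 p n / a (sn2 p n) then 1 else 0)))
        \<longlonglongrightarrow> 0)"
proof -
  have p_has_sum: "(p n has_sum 1) UNIV" if "n \<ge> 1" for n
    using p_sum[OF that] p_nonneg[OF that] by (rule sums_nonneg_imp_has_sum)
  obtain c1 where "(\<lambda>n. EF1 p n / real n) \<longlonglongrightarrow> c1" and "0 < c1"
    using c1 by blast
  then have s_ge: "\<forall>\<^sub>F n in sequentially. c1 / (2 * exp 1) * real n \<le> sn2 p n"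
    using p_nonneg p_has_sum by (intro sn2_eventually_ge_linear)
  have "0 < c1 / (2 * exp 1)"
    using \<open>0 < c1\<close> by simp
  show ?thesis
    using p_nonneg p_has_sum a_ge a_lin s_ge \<open>0 < c1 / (2 * exp 1)\<close>
    by (blast intro: limsup_large_species_tendsto_0 lindeberg_sum_tendsto_0)
qed

end
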